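(* Let $X$ be a nonnegative random variable and $\nu\ge1$. Suppose there exist constants $\Theta_1>0$ and $\Theta_2>0$ such that $\mathbb EX^p\le[p^{\nu p}+\Theta_2^{\nu p}]\Theta_1^{2p}$ for all integers $p\ge1$. Then for every $\vartheta>0$, $$\mathbb P(X>\vartheta)\le3\exp[\Theta_2/(2e)]\exp\Big[-\frac{\vartheta^{1/\nu}}{2e\Theta_1^{2/\nu}}\Big].$$ *)

theory Defs
  imports "HOL-Probability.Probability"
begin

end

theory Submission
  imports Defs
begin

(*
  Markov's inequality for the p-th moment gives, with s = (t / T1^2)^(1/nu),
    P(X > t) <= (p/s)^(nu p) + (T2/s)^(nu p).
  The bound is trivial unless s > 2e and s > T2; then take an integer p with
  s/(2e) <= p <= s/e.  The first term is at most e^(-p) <= e^(-s/(2e)) since p/s <= 1/e,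
  and the second is at most (T2/s)^(s/(2e)) <= exp((T2 - s)/(2e)) by ln r <= r - 1.
*)

lemma powr_le_exp_neg:
  fixes x a b :: real
  assumes "0 < x" "x \<le> exp (-1)" "0 \<le> a" "a \<le> b"
  shows "x powr b \<le> exp (- a)"
proof -
  have "exp (-1) < (1::real)" by simp
  with assms(2) have "x < 1" by linarith
  have "x powr b \<le> x powr a" using assms \<open>x < 1\<close> by (intro powr_mono') auto
  also have "\<dots> = exp (a * ln x)" using assms(1) by (simp add: powr_def mult.commute)
  also have "\<dots> \<le> exp (a * (-1))"
  proof -
    have "ln x \<le> ln (exp (-1))" using assms(1,2) by (subst ln_le_cancel_iff) auto
    then show ?thesis using assms(3) by (intro exp_mono mult_left_mono) simp_all
  qed
  finally show ?thesis by simp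
qed

lemma powr_le_exp_mult_diff:
  fixes r a b :: real
  assumes "0 < r" "r \<le> 1" "0 \<le> a" "a \<le> b"
  shows "r powr b \<le> exp (a * (r - 1))"
proof -
  have "r powr b \<le> r powr a" using assms by (intro powr_mono') auto
  also have "\<dots> = exp (a * ln r)" using assms(1) by (simp add: powr_def mult.commute)
  also have "\<dots> \<le> exp (a * (r - 1))"
    using ln_le_minus_one[OF assms(1)] assms(3) by (intro exp_mono mult_left_mono)
  finally show ?thesis .
qed

lemma exists_nat_between_double:
  fixes y :: real
  assumes "1 \<le> y"
  obtains p :: nat where "1 \<le> p" "y \<le> real p" "real p \<le> 2 * y"
proof
  show "y \<le> real (nat \<lceil>y\<rceil>)" by linarith
  then show "1 \<le> nat \<lceil>y\<rceil>" using assms by linarith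
  show "real (nat \<lceil>y\<rceil>) \<le> 2 * y" using assms by linarith
qed

lemma (in finite_measure) measure_gt_le_moment:
  fixes X :: "'a \<Rightarrow> real" and t B :: real and p :: nat
  assumes "X \<in> borel_measurable M" "0 < t" "0 \<le> B"
    and "(\<integral>\<^sup>+ x. ennreal (X x ^ p) \<partial>M) \<le> ennreal B"
  shows "measure M {x \<in> space M. X x > t} \<le> B / t ^ p"
proof -
  let ?S = "{x \<in> space M. X x > t}"
  have "?S \<in> sets M" using assms(1) by measurable
  then have "ennreal (t ^ p) * emeasure M ?S = (\<integral>\<^sup>+ x. ennreal (t ^ p) * indicator ?S x \<partial>M)"
    by (simp add: nn_integral_cmult_indicator)
  also have "\<dots> \<le> (\<integral>\<^sup>+ x. ennreal (X x ^ p) \<partial>M)"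
  proof (rule nn_integral_mono)
    fix x assume "x \<in> space M"
    then show "ennreal (t ^ p) * indicator ?S x \<le> ennreal (X x ^ p)"
      using assms(2) by (auto simp: indicator_def intro!: ennreal_leI power_mono)
  qed
  also have "\<dots> \<le> ennreal B" by (fact assms(4))
  finally have "ennreal (t ^ p * measure M ?S) \<le> ennreal B"
    using assms(2) by (simp add: emeasure_eq_measure ennreal_mult)
  then have "t ^ p * measure M ?S \<le> B"
    using assms(3) by (simp add: ennreal_le_iff)
  then show ?thesis using assms(2) by (simp add: field_simps)
qed

lemma power_eq_scaled_powr:
  fixes \<nu> t c :: real and p :: nat
  assumes "0 < \<nu>" "0 < t" "0 < c"
  shows "t ^ p = (t powr (1 / \<nu>) / c powr (2 / \<nu>)) powr (\<nu> * real p) * c ^ (2 * p)"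
proof -
  have "(t powr (1 / \<nu>) / c powr (2 / \<nu>)) powr \<nu> = t / c\<^sup>2"
    using assms by (simp add: powr_divide powr_powr powr_numeral)
  then have "(t powr (1 / \<nu>) / c powr (2 / \<nu>)) powr (\<nu> * real p) = t ^ p / c ^ (2 * p)"
    using assms by (simp add: powr_powr[symmetric] powr_realpow power_divide power_mult)
  then show ?thesis using assms(3) by simp
qed

lemma tail_bound_of_moment_ratios:
  fixes q \<nu> T2 s :: real
  assumes "q \<le> 1" "1 \<le> \<nu>" "0 < T2" "0 < s"
    and moments: "\<And>p::nat. 1 \<le> p \<Longrightarrow>
      q \<le> (real p / s) powr (\<nu> * real p) + (T2 / s) powr (\<nu> * real p)"
  shows "q \<le> 3 * exp (T2 / (2 * exp 1)) * exp (- s / (2 * exp 1))"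
proof (cases "1 \<le> 3 * exp (T2 / (2 * exp 1)) * exp (- s / (2 * exp 1))")
  case True
  then show ?thesis using assms(1) by linarith
next
  case False
  define y where "y = s / (2 * exp 1)"
  define E where "E = exp (T2 / (2 * exp 1))"
  have "1 \<le> E" using assms(3) by (simp add: E_def)
  then have exp_y_le: "exp (- y) \<le> E * exp (- y)" by simp
  have small: "E * exp (- y) < 1 / 3" using False by (simp add: E_def y_def)
  have "3 * E < exp y" using small by (simp add: exp_minus field_simps)
  then have "exp 1 < exp y" using \<open>1 \<le> E\<close> exp_le by linarith
  then have "1 \<le> y" by simp
  have "exp (T2 / (2 * exp 1) - y) = E * exp (- y)" by (simp add: E_def flip: exp_add)
  then have "exp (T2 / (2 * exp 1) - y) < 1" using small by linarith
  then have "T2 \<le> s" by (simp add: y_def field_simps)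
  obtain p :: nat where "1 \<le> p" "y \<le> real p" "real p \<le> 2 * y"
    using exists_nat_between_double[OF \<open>1 \<le> y\<close>] .
  have "real p \<le> \<nu> * real p" using mult_right_mono[OF assms(2), of "real p"] by simp
  with \<open>y \<le> real p\<close> have y_le: "y \<le> \<nu> * real p" by linarith
  have "(real p / s) powr (\<nu> * real p) \<le> exp (- y)"
  proof (rule powr_le_exp_neg)
    show "real p / s \<le> exp (- 1)"
      using \<open>real p \<le> 2 * y\<close> assms(4) by (simp add: y_def exp_minus field_simps)
  qed (use \<open>1 \<le> p\<close> \<open>1 \<le> y\<close> y_le assms(4) in auto)
  moreover have "(T2 / s) powr (\<nu> * real p) \<le> exp (y * (T2 / s - 1))"
    using \<open>T2 \<le> s\<close> \<open>1 \<le> y\<close> y_le assms(3,4) by (intro powr_le_exp_mult_diff) auto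
  moreover have "exp (y * (T2 / s - 1)) = E * exp (- y)"
  proof -
    have "y * (T2 / s - 1) = T2 / (2 * exp 1) + - y"
      using assms(4) by (simp add: y_def field_simps)
    then show ?thesis by (simp only: E_def exp_add)
  qed
  ultimately have "q \<le> exp (- y) + E * exp (- y)"
    using moments[OF \<open>1 \<le> p\<close>] by linarith
  also have "\<dots> \<le> 3 * E * exp (- y)" using exp_y_le by simp
  finally show ?thesis by (simp add: E_def y_def)
qed

theorem corollaryB2:
  fixes M :: "'a measure" and X :: "'a \<Rightarrow> real"
    and \<nu> T1 T2 t :: real
  assumes "prob_space M"
    and "X \<in> borel_measurable M"
    and "\<And>x. x \<in> space M \<Longrightarrow> X x \<ge> 0"
    and "\<nu> \<ge> 1"
    and "T1 > 0" and "T2 > 0"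
    and "\<And>p::nat. p \<ge> 1 \<Longrightarrow>
          (\<integral>\<^sup>+ x. ennreal (X x ^ p) \<partial>M)
            \<le> ennreal ((real p powr (\<nu> * real p) + T2 powr (\<nu> * real p)) * T1 ^ (2 * p))"
    and "t > 0"
  shows "measure M {x \<in> space M. X x > t}
           \<le> 3 * exp (T2 / (2 * exp 1))
               * exp (- (t powr (1 / \<nu>)) / (2 * exp 1 * T1 powr (2 / \<nu>)))"
proof -
  interpret prob_space M by fact
  define s where "s = t powr (1 / \<nu>) / T1 powr (2 / \<nu>)"
  have "0 < s" using assms by (simp add: s_def)
  have "measure M {x \<in> space M. X x > t} \<le> 3 * exp (T2 / (2 * exp 1)) * exp (- s / (2 * exp 1))"
  proof (rule tail_bound_of_moment_ratios)
    fix p :: nat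
    assume "1 \<le> p"
    have t_pow: "t ^ p = s powr (\<nu> * real p) * T1 ^ (2 * p)"
      unfolding s_def using assms by (intro power_eq_scaled_powr) auto
    have "measure M {x \<in> space M. X x > t}
        \<le> (real p powr (\<nu> * real p) + T2 powr (\<nu> * real p)) * T1 ^ (2 * p) / t ^ p"
      using assms \<open>1 \<le> p\<close> by (intro measure_gt_le_moment) auto
    also have "\<dots> = (real p powr (\<nu> * real p) + T2 powr (\<nu> * real p)) / s powr (\<nu> * real p)"
      using assms by (simp add: t_pow)
    also have "\<dots> = (real p / s) powr (\<nu> * real p) + (T2 / s) powr (\<nu> * real p)"
      using \<open>0 < s\<close> by (simp add: powr_divide add_divide_distrib)
    finally show "measure M {x \<in> space M. X x > t}
        \<le> (real p / s) powr (\<nu> * real p) + (T2 / s) powr (\<nu> * real p)" .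
  qed (use assms \<open>0 < s\<close> prob_le_1 in auto)
  then show ?thesis by (simp add: s_def mult.commute)
qed

end
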